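(* There is an absolute constant $C>0$ such that for all real $k,s$ and all integers $N\ge0$, the function $g_{k,s}(x)=e^{-\frac12(x-s)^2+ikx}$ satisfies \[ \bigl\|g_{k,s}-\widehat{\Pi}_N g_{k,s}\bigr\|\le \frac{C}{\sqrt{(N+1)!}}\left(\frac{k^2+s^2}{2}\right)^{\frac{N+1}{2}}. \]
   Context: $\|\cdot\|$ is the $L^2(\mathbb{R})$ norm. $\widehat{P}_N=\{e^{-x^2/2}\psi(x):\ \psi\text{ a polynomial of degree}\le N\}$ and $\widehat{\Pi}_N$ is the $L^2(\mathbb{R})$-orthogonal projection onto $\widehat{P}_N$. *)

theory Defs
  imports "HOL-Analysis.Analysis" "HOL-Computational_Algebra.Polynomial"
begin

definition l2_inner :: "(real \<Rightarrow> complex) \<Rightarrow> (real \<Rightarrow> complex) \<Rightarrow> complex" where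
  "l2_inner f h = (LINT x|lborel. f x * cnj (h x))"

definition l2_norm :: "(real \<Rightarrow> complex) \<Rightarrow> real" where
  "l2_norm f = sqrt (LINT x|lborel. (cmod (f x))^2)"

definition hatP :: "nat \<Rightarrow> (real \<Rightarrow> complex) set" where
  "hatP N = {(\<lambda>x. complex_of_real (exp (- (x^2) / 2)) * poly \<psi> (complex_of_real x)) | \<psi>.
               degree \<psi> \<le> N}"

definition hatPi :: "nat \<Rightarrow> (real \<Rightarrow> complex) \<Rightarrow> (real \<Rightarrow> complex)" where
  "hatPi N g = (THE p. p \<in> hatP N \<and> (\<forall>q\<in>hatP N. l2_inner (\<lambda>x. g x - p x) q = 0))"

definition gks :: "real \<Rightarrow> real \<Rightarrow> real \<Rightarrow> complex" where
  "gks k s x = exp (complex_of_real (- ((x - s)^2) / 2) + \<i> * complex_of_real (k * x))"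

end

theory Submission
  imports Defs "HOL-Probability.Distributions"
begin

text \<open>
  The functions e^{-x^2/2} H_m, with H_m the Hermite polynomials, are orthogonal with squared
  norms 2^m m! sqrt pi, so hatPi N g is the truncated Hermite series of g and Bessel's identity
  gives the error. For z = s + i k, expanding e^{z x} in powers of x and integrating by parts
  against e^{-x^2} H_m yields <g_{k,s}, e^{-x^2/2} H_m> = e^{-s^2/2} sqrt pi z^m e^{z^2/4}.
  With A = (k^2 + s^2) / 2 the squared error is therefore sqrt pi (1 - e^{-A} sum_{m<=N} A^m / m!),
  a Poisson tail, which is at most sqrt pi A^{N+1} / (N+1)!. As pi^{1/4} < 2, C = 2 works.
\<close>

section \<open>Gaussian moments\<close>

definition gauss_moment :: "nat \<Rightarrow> real" where
  "gauss_moment i = (if even i then sqrt pi * fact i / (4 ^ (i div 2) * fact (i div 2)) else 0)"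

lemma has_bochner_integral_gauss_moment:
  "has_bochner_integral lborel (\<lambda>x. exp (- x\<^sup>2) * x ^ i) (gauss_moment i)"
proof -
  have density: "exp (- x\<^sup>2) = sqrt pi * normal_density 0 (1 / sqrt 2) x" for x
    by (simp add: normal_density_def power_divide)
  show ?thesis
  proof (cases "even i")
    case True
    then obtain k where k: "i = 2 * k" by (auto elim: evenE)
    have "has_bochner_integral lborel
        (\<lambda>x. sqrt pi * (normal_density 0 (1 / sqrt 2) x * (x - 0) ^ (2 * k)))
        (sqrt pi * (fact (2 * k) / ((2 / (1 / sqrt 2)\<^sup>2) ^ k * fact k)))"
      by (intro has_bochner_integral_mult_right normal_moment_even) auto
    moreover have "2 / (1 / sqrt 2)\<^sup>2 = (4::real)" by (simp add: power_divide)
    ultimately show ?thesis using k by (simp add: density gauss_moment_def mult.assoc)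
  next
    case False
    then obtain k where k: "i = 2 * k + 1" by (auto elim: oddE)
    have "has_bochner_integral lborel
        (\<lambda>x. sqrt pi * (normal_density 0 (1 / sqrt 2) x * (x - 0) ^ (2 * k + 1))) (sqrt pi * 0)"
      by (intro has_bochner_integral_mult_right normal_moment_odd) auto
    then show ?thesis using k False by (simp add: density gauss_moment_def mult.assoc)
  qed
qed

lemma gauss_moment_Suc_Suc: "2 * gauss_moment (Suc (Suc i)) = real (Suc i) * gauss_moment i"
proof (cases "even i")
  case True
  then obtain k where k: "i = 2 * k" by (auto elim: evenE)
  have "fact (2 * k + 2) = real (2 * k + 2) * (2 * k + 1) * fact (2 * k)"
    by (simp add: algebra_simps)
  then have "2 * gauss_moment (Suc (Suc i))
      = (4 * real (Suc k)) * (sqrt pi * (2 * k + 1) * fact (2 * k)) / ((4 * real (Suc k)) * (4 ^ k * fact k))"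
    using k by (simp add: gauss_moment_def algebra_simps)
  also have "\<dots> = real (Suc i) * gauss_moment i"
    using k by (subst mult_divide_mult_cancel_left) (auto simp: gauss_moment_def)
  finally show ?thesis .
next
  case False
  then show ?thesis by (simp add: gauss_moment_def)
qed

lemma gauss_moment_exp_sums:
  fixes u :: complex
  shows "(\<lambda>i. complex_of_real (gauss_moment i / fact i) * u ^ i) sums (sqrt pi * exp (u\<^sup>2 / 4))"
proof -
  let ?f = "\<lambda>i. complex_of_real (gauss_moment i / fact i) * u ^ i"
  have odd_terms: "?f i = 0" if "i \<notin> range (\<lambda>k. 2 * k)" for i
    using that by (auto simp: gauss_moment_def elim!: evenE)
  have even_terms: "?f (2 * k) = sqrt pi * ((u\<^sup>2 / 4) ^ k /\<^sub>R fact k)" for k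
  proof -
    have "u ^ (2 * k) = (u\<^sup>2) ^ k" by (rule power_mult)
    then show ?thesis by (simp add: gauss_moment_def power_divide scaleR_conv_of_real field_simps)
  qed
  have "(\<lambda>k. ?f (2 * k)) sums (sqrt pi * exp (u\<^sup>2 / 4))"
    unfolding even_terms by (intro sums_mult exp_converges)
  moreover have "strict_mono (\<lambda>k::nat. 2 * k)" by (rule strict_monoI) simp
  ultimately show ?thesis
    using sums_mono_reindex[of "\<lambda>k. 2 * k" ?f] odd_terms by blast
qed

text \<open>The integral of e^{-x^2} p(x), defined through the moments so that it is linear in p
  without integrability side conditions (see has_bochner_integral_gauss_integral).\<close>

definition gauss_integral :: "complex poly \<Rightarrow> complex" where
  "gauss_integral p = (\<Sum>i\<le>degree p. coeff p i * gauss_moment i)"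

lemma gauss_integral_eq_sum:
  "degree p \<le> n \<Longrightarrow> gauss_integral p = (\<Sum>i\<le>n. coeff p i * gauss_moment i)"
  unfolding gauss_integral_def by (rule sum.mono_neutral_left) (auto simp: coeff_eq_0)

lemma has_bochner_integral_gauss_integral:
  "has_bochner_integral lborel (\<lambda>x. of_real (exp (- x\<^sup>2)) * poly p (of_real x))
     (gauss_integral p)"
proof -
  have "has_bochner_integral lborel
      (\<lambda>x. \<Sum>i\<le>degree p. coeff p i * complex_of_real (exp (- x\<^sup>2) * x ^ i))
      (gauss_integral p)"
    unfolding gauss_integral_def
    by (intro has_bochner_integral_sum has_bochner_integral_mult_right has_bochner_integral_of_real
        has_bochner_integral_gauss_moment)
  then show ?thesis by (simp add: poly_altdef sum_distrib_left algebra_simps)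
qed

lemma gauss_integral_add: "gauss_integral (p + q) = gauss_integral p + gauss_integral q"
proof -
  define n where "n = max (degree p) (degree q)"
  have "degree (p + q) \<le> n" "degree p \<le> n" "degree q \<le> n"
    by (auto simp: n_def degree_add_le)
  then show ?thesis by (simp add: gauss_integral_eq_sum sum.distrib algebra_simps)
qed

lemma gauss_integral_smult: "gauss_integral (smult c p) = c * gauss_integral p"
  by (simp add: gauss_integral_eq_sum[of "smult c p" "degree p"] gauss_integral_def
      sum_distrib_left mult.assoc)

lemma gauss_integral_diff: "gauss_integral (p - q) = gauss_integral p - gauss_integral q"
  using gauss_integral_add[of p "-q"] gauss_integral_smult[of "-1" q] by simp

lemma gauss_integral_0 [simp]: "gauss_integral 0 = 0"
  by (simp add: gauss_integral_def)

lemma gauss_integral_sum: "gauss_integral (\<Sum>i\<in>A. f i) = (\<Sum>i\<in>A. gauss_integral (f i))"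
  by (induction A rule: infinite_finite_induct) (simp_all add: gauss_integral_add)

lemma gauss_integral_monom: "gauss_integral (monom c k) = c * gauss_moment k"
proof -
  have "gauss_integral (monom c k) = (\<Sum>i\<le>k. if i = k then c * gauss_moment i else 0)"
    by (rule trans[OF gauss_integral_eq_sum[OF degree_monom_le]], rule sum.cong) auto
  then show ?thesis by simp
qed

lemma gauss_integral_const: "gauss_integral [:c:] = c * sqrt pi"
  by (simp add: gauss_integral_def gauss_moment_def)

lemma gauss_integral_pCons_0:
  "gauss_integral (pCons 0 p) = (\<Sum>i\<le>degree p. coeff p i * gauss_moment (Suc i))"
proof -
  have "gauss_integral (pCons 0 p) = (\<Sum>i\<le>Suc (degree p). coeff (pCons 0 p) i * gauss_moment i)"
    by (rule gauss_integral_eq_sum) (rule degree_pCons_le)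
  also have "\<dots> = (\<Sum>i\<le>degree p. coeff p i * gauss_moment (Suc i))"
    by (subst sum.atMost_Suc_shift) simp
  finally show ?thesis .
qed

lemma gauss_integral_pderiv: "gauss_integral (pderiv p) = 2 * gauss_integral (pCons 0 p)"
proof -
  define n where "n = degree p"
  have "gauss_integral (pderiv p) = (\<Sum>i\<le>n. coeff p (Suc i) * of_real (real (Suc i) * gauss_moment i))"
    by (simp add: gauss_integral_eq_sum[of _ n] n_def degree_pderiv coeff_pderiv mult_ac)
  also have "\<dots> = 2 * (\<Sum>i\<le>n. coeff p (Suc i) * gauss_moment (Suc (Suc i)))"
    by (simp only: gauss_moment_Suc_Suc[symmetric]) (simp add: sum_distrib_left mult_ac)
  also have "\<dots> = 2 * (\<Sum>i\<le>Suc n. coeff p i * gauss_moment (Suc i))"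
    by (subst sum.atMost_Suc_shift) (simp add: gauss_moment_def[of "Suc 0"])
  also have "\<dots> = 2 * gauss_integral (pCons 0 p)"
    by (simp add: gauss_integral_pCons_0 n_def coeff_eq_0)
  finally show ?thesis .
qed

section \<open>Hermite polynomials\<close>

fun hermite :: "nat \<Rightarrow> complex poly" where
  "hermite 0 = 1"
| "hermite (Suc n) = pCons 0 (smult 2 (hermite n)) - pderiv (hermite n)"

declare hermite.simps(2) [simp del]

lemma degree_hermite [simp]: "degree (hermite n) = n"
  and lead_coeff_hermite [simp]: "coeff (hermite n) n = 2 ^ n"
proof (induction n)
  case (Suc n)
  have "degree (pderiv (hermite n)) < Suc n"
    using Suc.IH by (simp add: degree_pderiv)
  then have lc: "coeff (hermite (Suc n)) (Suc n) = 2 ^ Suc n"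
    using Suc.IH by (simp add: hermite.simps(2) coeff_eq_0)
  have "degree (hermite (Suc n)) \<le> Suc n"
    using Suc.IH \<open>degree (pderiv (hermite n)) < Suc n\<close>
    unfolding hermite.simps(2) by (intro degree_diff_le) (auto simp: degree_pCons_eq_if)
  moreover have "Suc n \<le> degree (hermite (Suc n))"
    by (rule le_degree) (simp add: lc)
  ultimately show "degree (hermite (Suc n)) = Suc n" "coeff (hermite (Suc n)) (Suc n) = 2 ^ Suc n"
    using lc by simp_all
qed simp_all

lemma coeff_hermite_real: "coeff (hermite n) i \<in> \<real>"
proof (induction n arbitrary: i)
  case (Suc n)
  then show ?case by (cases i) (auto simp: hermite.simps(2) coeff_pderiv)
qed (simp add: coeff_1)

lemma cnj_poly_hermite: "cnj (poly (hermite n) (of_real x)) = poly (hermite n) (of_real x)"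
  using poly_cnj_real[OF coeff_hermite_real, of n "of_real x"] by simp

lemma gauss_integral_hermite_Suc_mult:
  "gauss_integral (hermite (Suc n) * q) = gauss_integral (hermite n * pderiv q)"
proof -
  have "hermite (Suc n) * q = smult 2 (pCons 0 (hermite n * q)) - pderiv (hermite n) * q"
    by (simp add: hermite.simps(2) algebra_simps mult_pCons_left)
  then have "gauss_integral (hermite (Suc n) * q)
      = 2 * gauss_integral (pCons 0 (hermite n * q)) - gauss_integral (pderiv (hermite n) * q)"
    by (simp only: gauss_integral_diff gauss_integral_smult)
  also have "2 * gauss_integral (pCons 0 (hermite n * q))
      = gauss_integral (hermite n * pderiv q) + gauss_integral (pderiv (hermite n) * q)"
    by (simp add: gauss_integral_pderiv[symmetric] pderiv_mult gauss_integral_add mult.commute)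
  finally show ?thesis by simp
qed

lemma gauss_integral_hermite_mult:
  "gauss_integral (hermite n * q) = gauss_integral ((pderiv ^^ n) q)"
  by (induction n arbitrary: q)
    (simp_all add: gauss_integral_hermite_Suc_mult funpow_Suc_right del: funpow.simps)

lemma higher_pderiv_degree_le:
  fixes q :: "'a::{comm_semiring_1,semiring_no_zero_divisors,semiring_char_0} poly"
  assumes "degree q \<le> n"
  shows "(pderiv ^^ n) q = [:fact n * coeff q n:]"
proof (rule poly_eqI)
  fix i
  show "coeff ((pderiv ^^ n) q) i = coeff [:fact n * coeff q n:] i"
    using assms by (cases i) (auto simp: coeff_higher_pderiv coeff_eq_0 pochhammer_fact)
qed

lemma gauss_integral_hermite_mult_degree_le:
  "degree q \<le> n \<Longrightarrow> gauss_integral (hermite n * q) = fact n * coeff q n * sqrt pi"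
  by (simp add: gauss_integral_hermite_mult higher_pderiv_degree_le gauss_integral_const)

definition hermite_sq_norm :: "nat \<Rightarrow> real" where
  "hermite_sq_norm n = 2 ^ n * fact n * sqrt pi"

lemma hermite_sq_norm_pos: "hermite_sq_norm n > 0"
  by (simp add: hermite_sq_norm_def)

lemma gauss_integral_hermite_hermite:
  "gauss_integral (hermite n * hermite m) = (if n = m then hermite_sq_norm n else 0)"
proof (cases "m \<le> n")
  case True
  then show ?thesis by (auto simp: gauss_integral_hermite_mult_degree_le coeff_eq_0 hermite_sq_norm_def)
next
  case False
  then show ?thesis by (subst mult.commute) (simp add: gauss_integral_hermite_mult_degree_le coeff_eq_0)
qed

lemma hermite_span:
  "degree p \<le> N \<Longrightarrow> \<exists>d. p = (\<Sum>m\<le>N. smult (d m) (hermite m))"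
proof (induction N arbitrary: p)
  case 0
  then show ?case by (intro exI[of _ "\<lambda>_. coeff p 0"]) (simp add: degree_0_id)
next
  case (Suc N)
  define c where "c = coeff p (Suc N) / 2 ^ Suc N"
  have "degree (p - smult c (hermite (Suc N))) \<le> Suc N"
    using Suc.prems by (intro degree_diff_le) (auto intro: order.trans[OF degree_smult_le])
  moreover have "coeff (p - smult c (hermite (Suc N))) (Suc N) = 0"
    by (simp add: c_def)
  ultimately have "degree (p - smult c (hermite (Suc N))) \<le> N"
    by (metis le_SucE leading_coeff_0_iff degree_0 le0)
  then obtain d where d: "p - smult c (hermite (Suc N)) = (\<Sum>m\<le>N. smult (d m) (hermite m))"
    using Suc.IH by blast
  show ?case
    by (rule exI[of _ "d(Suc N := c)"]) (simp add: d[symmetric])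
qed

lemma poly_eq_0_if_orthogonal_hermite:
  assumes "degree p \<le> N" and "\<And>m. m \<le> N \<Longrightarrow> gauss_integral (hermite m * p) = 0"
  shows "p = 0"
proof (rule ccontr)
  assume "p \<noteq> 0"
  then have "gauss_integral (hermite (degree p) * p) \<noteq> 0"
    by (simp add: gauss_integral_hermite_mult_degree_le)
  with assms show False by blast
qed

section \<open>Gaussian integrals against exponentials\<close>

definition gauss_exp_poly :: "complex \<Rightarrow> complex poly \<Rightarrow> real \<Rightarrow> complex" where
  "gauss_exp_poly u p x = of_real (exp (- x\<^sup>2)) * exp (u * of_real x) * poly p (of_real x)"

lemma norm_poly_of_real_le:
  fixes p :: "'a::real_normed_field poly"
  shows "norm (poly p (of_real x)) \<le> (\<Sum>i\<le>degree p. norm (coeff p i) * \<bar>x\<bar> ^ i)"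
proof -
  have "norm (poly p (of_real x)) \<le> (\<Sum>i\<le>degree p. norm (coeff p i * of_real x ^ i))"
    unfolding poly_altdef by (rule norm_sum)
  also have "\<dots> = (\<Sum>i\<le>degree p. norm (coeff p i) * \<bar>x\<bar> ^ i)"
    by (simp add: norm_mult norm_power)
  finally show ?thesis .
qed

lemma integrable_gauss_half_abs_poly:
  "integrable lborel (\<lambda>x. exp (- x\<^sup>2 / 2) * (\<Sum>i\<le>n. c i * \<bar>x\<bar> ^ i) :: real)"
proof -
  have "integrable lborel
      (\<lambda>x. \<Sum>i\<le>n. (sqrt (2 * pi) * c i) * (std_normal_density x * \<bar>x\<bar> ^ i))"
    by (intro Bochner_Integration.integrable_sum Bochner_Integration.integrable_mult_right
        integrable_std_normal_moment_abs)
  then show ?thesis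
    by (simp add: std_normal_density_def sum_distrib_left sum_distrib_right algebra_simps)
qed

lemma norm_gauss_exp_poly_le:
  "norm (gauss_exp_poly u p x)
     \<le> exp ((norm u)\<^sup>2 / 2) *
        (exp (- x\<^sup>2 / 2) * (\<Sum>i\<le>degree p. norm (coeff p i) * \<bar>x\<bar> ^ i))"
proof -
  have "norm (exp (u * of_real x)) \<le> exp (norm u * \<bar>x\<bar>)"
    using complex_Re_le_cmod[of "u * of_real x"] by (simp add: norm_mult)
  moreover have "exp (- x\<^sup>2) * exp (norm u * \<bar>x\<bar>)
      \<le> exp ((norm u)\<^sup>2 / 2) * exp (- x\<^sup>2 / 2)"
  proof -
    have "0 \<le> (\<bar>x\<bar> - norm u)\<^sup>2 / 2" by simp
    then show ?thesis by (simp add: power2_eq_square algebra_simps flip: exp_add)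
  qed
  ultimately have "exp (- x\<^sup>2) * norm (exp (u * of_real x))
      \<le> exp ((norm u)\<^sup>2 / 2) * exp (- x\<^sup>2 / 2)"
    by (meson exp_ge_zero mult_left_mono order.trans)
  then have "exp (- x\<^sup>2) * norm (exp (u * of_real x)) * norm (poly p (of_real x))
      \<le> exp ((norm u)\<^sup>2 / 2) * exp (- x\<^sup>2 / 2) *
        (\<Sum>i\<le>degree p. norm (coeff p i) * \<bar>x\<bar> ^ i)"
    by (rule mult_mono[OF _ norm_poly_of_real_le]) auto
  then show ?thesis
    by (simp add: gauss_exp_poly_def norm_mult mult.assoc)
qed

lemma integrable_gauss_exp_poly: "integrable lborel (gauss_exp_poly u p)"
proof (rule Bochner_Integration.integrable_bound)
  show "integrable lborel (\<lambda>x. exp ((norm u)\<^sup>2 / 2) *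
      (exp (- x\<^sup>2 / 2) * (\<Sum>i\<le>degree p. norm (coeff p i) * \<bar>x\<bar> ^ i)))"
    by (intro Bochner_Integration.integrable_mult_right integrable_gauss_half_abs_poly)
  show "gauss_exp_poly u p \<in> borel_measurable lborel"
    unfolding gauss_exp_poly_def[abs_def] measurable_lborel2
    by (intro borel_measurable_continuous_onI continuous_intros)
  show "AE x in lborel. norm (gauss_exp_poly u p x) \<le> norm (exp ((norm u)\<^sup>2 / 2) *
      (exp (- x\<^sup>2 / 2) * (\<Sum>i\<le>degree p. norm (coeff p i) * \<bar>x\<bar> ^ i)))"
    using norm_gauss_exp_poly_le[of u p] by (intro AE_I2) (auto intro: order.trans[OF _ abs_ge_self])
qed

lemma sum_power_div_fact_le_exp: "0 \<le> r \<Longrightarrow> (\<Sum>j<M. r ^ j / fact j) \<le> exp (r::real)"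
  using sum_le_suminf[OF summable_exp_generic[of r], of "{..<M}"]
  by (simp add: exp_def divide_inverse_commute)

lemma norm_exp_partial_sum_le:
  fixes u :: complex
  shows "norm (\<Sum>j<M. (u * of_real x) ^ j /\<^sub>R fact j) \<le> exp (norm u * x) + exp (- norm u * x)"
proof -
  have "norm (\<Sum>j<M. (u * of_real x) ^ j /\<^sub>R fact j) \<le> (\<Sum>j<M. (norm u * \<bar>x\<bar>) ^ j / fact j)"
    using norm_sum[of "\<lambda>j. (u * of_real x) ^ j /\<^sub>R fact j" "{..<M}"]
    by (simp add: norm_mult norm_power divide_inverse_commute)
  also have "\<dots> \<le> exp (norm u * \<bar>x\<bar>)"
    by (simp add: sum_power_div_fact_le_exp)
  also have "\<dots> \<le> exp (norm u * x) + exp (- norm u * x)"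
    by (cases "x \<ge> 0") (auto simp: add_increasing add_increasing2)
  finally show ?thesis .
qed

lemma gauss_exp_poly_integral_sums:
  "(\<lambda>j. u ^ j / fact j * gauss_integral (monom 1 j * p))
     sums integral\<^sup>L lborel (gauss_exp_poly u p)"
proof -
  define S where "S M x = (\<Sum>j<M. u ^ j / fact j *
      (of_real (exp (- x\<^sup>2)) * poly (monom 1 j * p) (of_real x)))" for M x
  define w where "w x = norm (gauss_exp_poly (norm u) p x) + norm (gauss_exp_poly (- norm u) p x)" for x
  have S_eq: "S M x
      = of_real (exp (- x\<^sup>2)) * (\<Sum>j<M. (u * of_real x) ^ j /\<^sub>R fact j) * poly p (of_real x)"
    for M x
    unfolding S_def by (simp add: sum_distrib_left sum_distrib_right poly_monom scaleR_conv_of_real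
        power_mult_distrib divide_inverse algebra_simps)
  have "(\<lambda>M. S M x) \<longlonglongrightarrow> gauss_exp_poly u p x" for x
    unfolding S_eq gauss_exp_poly_def by (intro tendsto_intros exp_converges[unfolded sums_def])
  moreover have "norm (S M x) \<le> w x" for M x
  proof -
    have "norm (S M x)
        \<le> exp (- x\<^sup>2) * (exp (norm u * x) + exp (- norm u * x)) * norm (poly p (of_real x))"
      unfolding S_eq norm_mult norm_of_real abs_exp_cancel
      by (intro mult_right_mono mult_left_mono norm_exp_partial_sum_le) auto
    then show ?thesis
      by (simp add: w_def gauss_exp_poly_def norm_mult algebra_simps)
  qed
  moreover have "integrable lborel w"
    unfolding w_def by (intro Bochner_Integration.integrable_add integrable_norm integrable_gauss_exp_poly)
  moreover have "S M \<in> borel_measurable lborel" for M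
    unfolding S_def measurable_lborel2 by (intro borel_measurable_continuous_onI continuous_intros)
  ultimately have
    "(\<lambda>M. integral\<^sup>L lborel (S M)) \<longlonglongrightarrow> integral\<^sup>L lborel (gauss_exp_poly u p)"
    using integrable_gauss_exp_poly[of u p]
    by (intro integral_dominated_convergence[where w = w]) (auto intro: borel_measurable_integrable)
  moreover have
    "integral\<^sup>L lborel (S M) = (\<Sum>j<M. u ^ j / fact j * gauss_integral (monom 1 j * p))" for M
    unfolding S_def[abs_def]
    by (intro has_bochner_integral_integral_eq has_bochner_integral_sum has_bochner_integral_mult_right
        has_bochner_integral_gauss_integral)
  ultimately show ?thesis by (simp add: sums_def)
qed

lemma higher_pderiv_monom_add:
  fixes c :: "'a::{comm_semiring_1,semiring_no_zero_divisors}"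
  shows "(pderiv ^^ n) (monom c (i + n)) = monom (pochhammer (of_nat i + 1) n * c) i"
  by (rule poly_eqI) (auto simp: coeff_higher_pderiv coeff_monom add.commute)

lemma gauss_integral_monom_add_mult_hermite:
  "gauss_integral (monom 1 (i + n) * hermite n) = fact (i + n) / fact i * gauss_moment i"
proof -
  have "fact (i + n) = (fact i * pochhammer (of_nat i + 1) n :: complex)"
    by (simp add: pochhammer_fact pochhammer_product' add.commute)
  then show ?thesis
    by (simp add: mult.commute[of _ "hermite n"] gauss_integral_hermite_mult higher_pderiv_monom_add
        gauss_integral_monom)
qed

lemma has_bochner_integral_gauss_exp_hermite:
  fixes u :: complex
  shows "has_bochner_integral lborel (gauss_exp_poly u (hermite n)) (sqrt pi * u ^ n * exp (u\<^sup>2 / 4))"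
proof -
  let ?t = "\<lambda>j. u ^ j / fact j * gauss_integral (monom 1 j * hermite n)"
  have zero: "?t j = 0" if "j < n" for j
    using that gauss_integral_hermite_mult_degree_le[of "monom 1 j" n]
    by (simp add: mult.commute[of _ "hermite n"] degree_monom_eq)
  have "?t (i + n) = u ^ n * (of_real (gauss_moment i / fact i) * u ^ i)" for i
    by (simp add: gauss_integral_monom_add_mult_hermite power_add)
  then have "(\<lambda>i. ?t (i + n)) sums (u ^ n * (sqrt pi * exp (u\<^sup>2 / 4)))"
    by (simp only:) (rule sums_mult[OF gauss_moment_exp_sums])
  with zero have "?t sums (u ^ n * (sqrt pi * exp (u\<^sup>2 / 4)))"
    by (rule sums_zero_iff_shift[THEN iffD1])
  then have "integral\<^sup>L lborel (gauss_exp_poly u (hermite n)) = sqrt pi * u ^ n * exp (u\<^sup>2 / 4)"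
    using sums_unique2[OF gauss_exp_poly_integral_sums] by (simp add: mult_ac)
  then show ?thesis
    using integrable_gauss_exp_poly has_bochner_integral_iff by blast
qed

section \<open>The L^2 inner product\<close>

lemma l2_inner_commute: "l2_inner h f = cnj (l2_inner f h)"
proof -
  have "(\<lambda>x. h x * cnj (f x)) = (\<lambda>x. cnj (f x * cnj (h x)))"
    by (simp add: mult.commute)
  then show ?thesis
    unfolding l2_inner_def by (simp only: Bochner_Integration.integral_cnj)
qed

lemma integrable_mult_cnj_commute:
  assumes "integrable lborel (\<lambda>x. f x * cnj (h x))"
  shows "integrable lborel (\<lambda>x. h x * cnj (f x))"
proof -
  have "(\<lambda>x. h x * cnj (f x)) = (\<lambda>x. cnj (f x * cnj (h x)))"
    by (simp add: mult.commute)
  then show ?thesis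
    using integrable_cnj[OF assms] by simp
qed

lemma l2_inner_self: "l2_inner f f = of_real ((l2_norm f)\<^sup>2)"
  unfolding l2_inner_def l2_norm_def complex_norm_square[symmetric] integral_complex_of_real
  by (simp add: integral_nonneg)

lemma integrable_mult_cnj_diff_left:
  assumes "integrable lborel (\<lambda>x. f x * cnj (h x))" and "integrable lborel (\<lambda>x. f' x * cnj (h x))"
  shows "integrable lborel (\<lambda>x. (f x - f' x) * cnj (h x))"
  unfolding left_diff_distrib using assms by (rule Bochner_Integration.integrable_diff)

lemma l2_inner_diff_left:
  assumes "integrable lborel (\<lambda>x. f x * cnj (h x))" and "integrable lborel (\<lambda>x. f' x * cnj (h x))"
  shows "l2_inner (\<lambda>x. f x - f' x) h = l2_inner f h - l2_inner f' h"
  unfolding l2_inner_def left_diff_distrib using assms by (rule Bochner_Integration.integral_diff)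

lemma l2_inner_diff_right:
  assumes "integrable lborel (\<lambda>x. f x * cnj (h x))" and "integrable lborel (\<lambda>x. f x * cnj (h' x))"
  shows "l2_inner f (\<lambda>x. h x - h' x) = l2_inner f h - l2_inner f h'"
  unfolding l2_inner_def complex_cnj_diff right_diff_distrib using assms
  by (rule Bochner_Integration.integral_diff)

lemma mult_cnj_sum: "f * cnj (\<Sum>i\<in>A. d i * h i) = (\<Sum>i\<in>A. cnj (d i) * (f * cnj (h i)))"
  by (simp add: sum_distrib_left mult_ac)

lemma integrable_mult_cnj_sum_right:
  "(\<And>i. i \<in> A \<Longrightarrow> integrable lborel (\<lambda>x. f x * cnj (h i x))) \<Longrightarrow>
    integrable lborel (\<lambda>x. f x * cnj (\<Sum>i\<in>A. d i * h i x))"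
  unfolding mult_cnj_sum
  by (intro Bochner_Integration.integrable_sum Bochner_Integration.integrable_mult_right)

lemma l2_inner_sum_right:
  "(\<And>i. i \<in> A \<Longrightarrow> integrable lborel (\<lambda>x. f x * cnj (h i x))) \<Longrightarrow>
    l2_inner f (\<lambda>x. \<Sum>i\<in>A. d i * h i x) = (\<Sum>i\<in>A. cnj (d i) * l2_inner f (h i))"
  unfolding l2_inner_def mult_cnj_sum
  by (subst Bochner_Integration.integral_sum) (auto intro: Bochner_Integration.integrable_mult_right)

lemma l2_inner_sum_left:
  "(\<And>i. i \<in> A \<Longrightarrow> integrable lborel (\<lambda>x. h i x * cnj (f x))) \<Longrightarrow>
    l2_inner (\<lambda>x. \<Sum>i\<in>A. d i * h i x) f = (\<Sum>i\<in>A. d i * l2_inner (h i) f)"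
  unfolding l2_inner_def sum_distrib_right mult.assoc
  by (subst Bochner_Integration.integral_sum) (auto intro: Bochner_Integration.integrable_mult_right)

section \<open>Projection onto hat P_N\<close>

definition gauss_poly :: "complex poly \<Rightarrow> real \<Rightarrow> complex" where
  "gauss_poly p x = of_real (exp (- (x ^ 2) / 2)) * poly p (of_real x)"

lemma hatP_iff: "q \<in> hatP N \<longleftrightarrow> (\<exists>p. q = gauss_poly p \<and> degree p \<le> N)"
  unfolding hatP_def gauss_poly_def[abs_def] by blast

lemma gauss_poly_in_hatP: "degree p \<le> N \<Longrightarrow> gauss_poly p \<in> hatP N"
  unfolding hatP_iff by blast

lemma gauss_poly_sum:
  "gauss_poly (\<Sum>i\<in>A. smult (d i) (p i)) x = (\<Sum>i\<in>A. d i * gauss_poly (p i) x)"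
  by (simp add: gauss_poly_def poly_sum sum_distrib_left mult.left_commute)

lemma has_bochner_integral_gauss_poly_hermite:
  "has_bochner_integral lborel (\<lambda>x. gauss_poly p x * cnj (gauss_poly (hermite m) x))
     (gauss_integral (p * hermite m))"
proof -
  have "exp (- (x ^ 2) / 2) * exp (- (x ^ 2) / 2) = exp (- x\<^sup>2)" for x :: real
    by (simp flip: exp_add)
  then have "(\<lambda>x. gauss_poly p x * cnj (gauss_poly (hermite m) x))
      = (\<lambda>x. of_real (exp (- x\<^sup>2)) * poly (p * hermite m) (of_real x))"
    by (simp add: gauss_poly_def cnj_poly_hermite mult_ac flip: of_real_mult)
  then show ?thesis
    using has_bochner_integral_gauss_integral by metis
qed

lemma integrable_gauss_poly_hermite:
  "integrable lborel (\<lambda>x. gauss_poly p x * cnj (gauss_poly (hermite m) x))"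
  using has_bochner_integral_gauss_poly_hermite has_bochner_integral_iff by blast

lemma l2_inner_gauss_poly_hermite:
  "l2_inner (gauss_poly p) (gauss_poly (hermite m)) = gauss_integral (p * hermite m)"
  unfolding l2_inner_def using has_bochner_integral_gauss_poly_hermite
  by (rule has_bochner_integral_integral_eq)

lemma integrable_mult_cnj_gauss_poly:
  assumes "\<And>m. integrable lborel (\<lambda>x. f x * cnj (gauss_poly (hermite m) x))"
  shows "integrable lborel (\<lambda>x. f x * cnj (gauss_poly p x))"
proof -
  obtain d where "p = (\<Sum>m\<le>degree p. smult (d m) (hermite m))"
    using hermite_span by blast
  then have "gauss_poly p x = (\<Sum>m\<le>degree p. d m * gauss_poly (hermite m) x)" for x
    by (metis gauss_poly_sum)
  then show ?thesis
    using integrable_mult_cnj_sum_right[OF assms] by simp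
qed

definition hermite_series :: "nat \<Rightarrow> (real \<Rightarrow> complex) \<Rightarrow> complex poly" where
  "hermite_series N g =
     (\<Sum>m\<le>N. smult (l2_inner g (gauss_poly (hermite m)) / hermite_sq_norm m) (hermite m))"

lemma degree_hermite_series: "degree (hermite_series N g) \<le> N"
  unfolding hermite_series_def
  by (intro degree_sum_le) (auto intro: order.trans[OF degree_smult_le])

lemma gauss_integral_hermite_series_mult_hermite:
  assumes "m \<le> N"
  shows "gauss_integral (hermite_series N g * hermite m) = l2_inner g (gauss_poly (hermite m))"
proof -
  have "gauss_integral (hermite_series N g * hermite m)
      = (\<Sum>n\<le>N. l2_inner g (gauss_poly (hermite n)) / hermite_sq_norm n *
          gauss_integral (hermite n * hermite m))"
    by (simp add: hermite_series_def sum_distrib_right gauss_integral_sum gauss_integral_smult)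
  also have "\<dots> = (\<Sum>n\<le>N. if n = m then l2_inner g (gauss_poly (hermite m)) else 0)"
    using hermite_sq_norm_pos[of m] by (intro sum.cong) (auto simp: gauss_integral_hermite_hermite)
  finally show ?thesis
    using assms by simp
qed

lemma orthogonal_hatP_iff:
  assumes g: "\<And>m. integrable lborel (\<lambda>x. g x * cnj (gauss_poly (hermite m) x))"
  shows "(\<forall>q\<in>hatP N. l2_inner (\<lambda>x. g x - gauss_poly p x) q = 0)
    \<longleftrightarrow> (\<forall>m\<le>N. gauss_integral (p * hermite m) = l2_inner g (gauss_poly (hermite m)))"
proof -
  have integrable:
    "integrable lborel (\<lambda>x. (g x - gauss_poly p x) * cnj (gauss_poly (hermite m) x))" for m
    using g integrable_gauss_poly_hermite by (rule integrable_mult_cnj_diff_left)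
  have inner_hermite: "l2_inner (\<lambda>x. g x - gauss_poly p x) (gauss_poly (hermite m))
      = l2_inner g (gauss_poly (hermite m)) - gauss_integral (p * hermite m)" for m
    by (simp add: l2_inner_diff_left[OF g integrable_gauss_poly_hermite] l2_inner_gauss_poly_hermite)
  have "l2_inner (\<lambda>x. g x - gauss_poly p x) q = 0"
    if q: "q \<in> hatP N"
      and coeffs: "\<forall>m\<le>N. gauss_integral (p * hermite m) = l2_inner g (gauss_poly (hermite m))"
    for q
  proof -
    obtain r where "q = gauss_poly r" "degree r \<le> N"
      using q hatP_iff by blast
    moreover obtain d where "r = (\<Sum>m\<le>N. smult (d m) (hermite m))"
      using hermite_span \<open>degree r \<le> N\<close> by blast
    ultimately have "q = (\<lambda>x. \<Sum>m\<le>N. d m * gauss_poly (hermite m) x)"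
      by (simp add: gauss_poly_sum fun_eq_iff)
    then show ?thesis
      using coeffs by (simp add: l2_inner_sum_right integrable inner_hermite)
  qed
  moreover have "gauss_poly (hermite m) \<in> hatP N" if "m \<le> N" for m
    using that by (simp add: gauss_poly_in_hatP)
  ultimately show ?thesis
    using inner_hermite by fastforce
qed

lemma hermite_series_orthogonal:
  assumes "\<And>m. integrable lborel (\<lambda>x. g x * cnj (gauss_poly (hermite m) x))"
  shows "\<forall>q\<in>hatP N. l2_inner (\<lambda>x. g x - gauss_poly (hermite_series N g) x) q = 0"
  using gauss_integral_hermite_series_mult_hermite by (simp add: orthogonal_hatP_iff[OF assms])

lemma hatPi_eq_hermite_series:
  assumes g: "\<And>m. integrable lborel (\<lambda>x. g x * cnj (gauss_poly (hermite m) x))"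
  shows "hatPi N g = gauss_poly (hermite_series N g)"
  unfolding hatPi_def
proof (rule the_equality)
  show "gauss_poly (hermite_series N g) \<in> hatP N
      \<and> (\<forall>q\<in>hatP N. l2_inner (\<lambda>x. g x - gauss_poly (hermite_series N g) x) q = 0)"
    using g by (simp add: gauss_poly_in_hatP degree_hermite_series hermite_series_orthogonal)
next
  fix P
  assume P: "P \<in> hatP N \<and> (\<forall>q\<in>hatP N. l2_inner (\<lambda>x. g x - P x) q = 0)"
  then obtain p where p: "P = gauss_poly p" "degree p \<le> N"
    using hatP_iff by blast
  with P have "\<forall>m\<le>N. gauss_integral (p * hermite m) = l2_inner g (gauss_poly (hermite m))"
    using orthogonal_hatP_iff[OF g] by blast
  then have "p - hermite_series N g = 0"
    using p degree_hermite_series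
    by (intro poly_eq_0_if_orthogonal_hermite[of _ N])
      (auto simp: degree_diff_le mult.commute[of "hermite _"] left_diff_distrib gauss_integral_diff
        gauss_integral_hermite_series_mult_hermite)
  then show "P = gauss_poly (hermite_series N g)"
    using p by simp
qed

lemma l2_norm_sub_hatPi_sq:
  assumes g: "\<And>m. integrable lborel (\<lambda>x. g x * cnj (gauss_poly (hermite m) x))"
    and g_sq: "integrable lborel (\<lambda>x. (cmod (g x))\<^sup>2)"
  shows "(l2_norm (\<lambda>x. g x - hatPi N g x))\<^sup>2
    = (l2_norm g)\<^sup>2
      - (\<Sum>m\<le>N. (cmod (l2_inner g (gauss_poly (hermite m))))\<^sup>2 / hermite_sq_norm m)"
proof -
  define c where "c m = l2_inner g (gauss_poly (hermite m))" for m
  define P where "P = gauss_poly (hermite_series N g)"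
  have P_sum: "P = (\<lambda>x. \<Sum>m\<le>N. c m / hermite_sq_norm m * gauss_poly (hermite m) x)"
    by (simp add: P_def hermite_series_def gauss_poly_sum c_def fun_eq_iff)
  have gg: "integrable lborel (\<lambda>x. g x * cnj (g x))"
    unfolding complex_norm_square[symmetric] using g_sq by (rule integrable_of_real)
  have gP: "integrable lborel (\<lambda>x. g x * cnj (P x))"
    unfolding P_def using g by (rule integrable_mult_cnj_gauss_poly)
  have PP: "integrable lborel (\<lambda>x. P x * cnj (P x))"
    unfolding P_def using integrable_gauss_poly_hermite by (rule integrable_mult_cnj_gauss_poly)
  have hg: "integrable lborel (\<lambda>x. gauss_poly (hermite m) x * cnj (g x))" for m
    using g by (rule integrable_mult_cnj_commute)
  have Pg: "integrable lborel (\<lambda>x. P x * cnj (g x))"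
    using gP by (rule integrable_mult_cnj_commute)
  have "l2_inner (\<lambda>x. g x - P x) P = 0"
    using hermite_series_orthogonal[OF g] gauss_poly_in_hatP[OF degree_hermite_series]
    by (simp add: P_def)
  then have "of_real ((l2_norm (\<lambda>x. g x - P x))\<^sup>2) = l2_inner (\<lambda>x. g x - P x) g"
    using l2_inner_diff_right[OF integrable_mult_cnj_diff_left[OF gg Pg]
        integrable_mult_cnj_diff_left[OF gP PP]]
    by (simp add: l2_inner_self)
  also have "\<dots> = l2_inner g g - l2_inner P g"
    by (rule l2_inner_diff_left[OF gg Pg])
  also have "l2_inner P g = (\<Sum>m\<le>N. c m / hermite_sq_norm m * cnj (c m))"
    unfolding P_sum c_def
    by (subst l2_inner_sum_left) (auto simp: hg l2_inner_commute[of "gauss_poly _"])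
  also have "\<dots> = of_real (\<Sum>m\<le>N. (cmod (c m))\<^sup>2 / hermite_sq_norm m)"
    by (simp flip: complex_norm_square)
  finally have "complex_of_real ((l2_norm (\<lambda>x. g x - P x))\<^sup>2)
      = of_real ((l2_norm g)\<^sup>2 - (\<Sum>m\<le>N. (cmod (c m))\<^sup>2 / hermite_sq_norm m))"
    by (simp only: l2_inner_self of_real_diff)
  then show ?thesis
    unfolding of_real_eq_iff c_def P_def hatPi_eq_hermite_series[OF g] .
qed

section \<open>The wave packet g_{k,s}\<close>

lemma gks_mult_cnj_gauss_poly_hermite:
  "gks k s x * cnj (gauss_poly (hermite m) x)
     = of_real (exp (- s\<^sup>2 / 2)) * gauss_exp_poly (s + \<i> * k) (hermite m) x"
proof -
  have "exp (complex_of_real (- ((x - s)\<^sup>2) / 2) + \<i> * of_real (k * x))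
        * of_real (exp (- (x\<^sup>2) / 2))
      = exp (of_real (- ((x - s)\<^sup>2) / 2) + \<i> * of_real (k * x) + of_real (- (x\<^sup>2) / 2))"
    by (simp only: exp_add exp_of_real)
  also have "of_real (- ((x - s)\<^sup>2) / 2) + \<i> * of_real (k * x) + of_real (- (x\<^sup>2) / 2)
      = of_real (- s\<^sup>2 / 2) + of_real (- x\<^sup>2) + (of_real s + \<i> * of_real k) * complex_of_real x"
    by (simp add: complex_eq_iff power2_eq_square field_simps)
  also have "exp \<dots>
      = of_real (exp (- s\<^sup>2 / 2)) * of_real (exp (- x\<^sup>2)) * exp ((of_real s + \<i> * of_real k) * of_real x)"
    by (simp only: exp_add exp_of_real)
  finally show ?thesis
    unfolding gks_def gauss_poly_def gauss_exp_poly_def complex_cnj_mult complex_cnj_complex_of_real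
      cnj_poly_hermite
    by (simp only: mult.assoc[symmetric])
qed

lemma has_bochner_integral_gks_hermite:
  "has_bochner_integral lborel (\<lambda>x. gks k s x * cnj (gauss_poly (hermite m) x))
     (of_real (exp (- s\<^sup>2 / 2)) * (sqrt pi * (s + \<i> * k) ^ m * exp ((s + \<i> * k)\<^sup>2 / 4)))"
  unfolding gks_mult_cnj_gauss_poly_hermite
  by (intro has_bochner_integral_mult_right has_bochner_integral_gauss_exp_hermite)

lemma has_bochner_integral_cmod_gks_sq:
  "has_bochner_integral lborel (\<lambda>x. (cmod (gks k s x))\<^sup>2) (sqrt pi)"
proof -
  have "(cmod (gks k s x))\<^sup>2 = sqrt pi * normal_density s (1 / sqrt 2) x" for x
    by (simp add: gks_def normal_density_def power_divide power2_eq_square flip: exp_add)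
  moreover have
    "has_bochner_integral lborel (\<lambda>x. sqrt pi * normal_density s (1 / sqrt 2) x) (sqrt pi * 1)"
    using integrable_normal_density[of "1 / sqrt 2" s] integral_normal_density[of "1 / sqrt 2" s]
    by (intro has_bochner_integral_mult_right) (simp add: has_bochner_integral_iff)
  ultimately show ?thesis by simp
qed

lemma cmod_l2_inner_gks_hermite_sq:
  "(cmod (l2_inner (gks k s) (gauss_poly (hermite m))))\<^sup>2 / hermite_sq_norm m
     = sqrt pi * exp (- ((k\<^sup>2 + s\<^sup>2) / 2)) * ((k\<^sup>2 + s\<^sup>2) / 2) ^ m / fact m"
proof -
  define z where "z = complex_of_real s + \<i> * of_real k"
  have "l2_inner (gks k s) (gauss_poly (hermite m))
      = of_real (exp (- s\<^sup>2 / 2)) * (sqrt pi * z ^ m * exp (z\<^sup>2 / 4))"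
    unfolding l2_inner_def z_def using has_bochner_integral_gks_hermite
    by (rule has_bochner_integral_integral_eq)
  moreover have "Re (z\<^sup>2) = s\<^sup>2 - k\<^sup>2"
    by (simp add: z_def power2_eq_square)
  ultimately have "cmod (l2_inner (gks k s) (gauss_poly (hermite m)))
      = sqrt pi * (exp (- s\<^sup>2 / 2) * exp ((s\<^sup>2 - k\<^sup>2) / 4)) * cmod z ^ m"
    by (simp add: norm_mult norm_power)
  also have "exp (- s\<^sup>2 / 2) * exp ((s\<^sup>2 - k\<^sup>2) / 4) = exp (- ((k\<^sup>2 + s\<^sup>2) / 4))"
    by (simp add: field_simps flip: exp_add)
  also have "cmod z ^ m = sqrt ((k\<^sup>2 + s\<^sup>2) ^ m)"
    by (simp add: z_def cmod_def real_sqrt_power add.commute)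
  finally have "(cmod (l2_inner (gks k s) (gauss_poly (hermite m))))\<^sup>2
      = sqrt pi * (sqrt pi * (exp (- ((k\<^sup>2 + s\<^sup>2) / 4)))\<^sup>2 * (k\<^sup>2 + s\<^sup>2) ^ m)"
    by (simp add: power_mult_distrib)
  moreover have "(exp (- ((k\<^sup>2 + s\<^sup>2) / 4)))\<^sup>2 = exp (- ((k\<^sup>2 + s\<^sup>2) / 2))"
    by (simp add: power2_eq_square flip: exp_add)
  ultimately show ?thesis
    by (simp add: hermite_sq_norm_def power_divide)
qed

lemma poisson_tail_le:
  fixes A :: real
  assumes "0 \<le> A"
  shows "1 - exp (- A) * (\<Sum>m\<le>N. A ^ m / fact m) \<le> A ^ Suc N / fact (Suc N)"
proof -
  obtain t where t: "\<bar>t\<bar> \<le> \<bar>A\<bar>"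
    and taylor: "exp A = (\<Sum>m<Suc N. A ^ m / fact m) + exp t / fact (Suc N) * A ^ Suc N"
    using Maclaurin_exp_le[of A "Suc N"] by blast
  have "1 - exp (- A) * (\<Sum>m\<le>N. A ^ m / fact m) = exp (- A) * (exp A - (\<Sum>m\<le>N. A ^ m / fact m))"
    by (simp add: right_diff_distrib flip: exp_add)
  also have "exp A - (\<Sum>m\<le>N. A ^ m / fact m) = exp t * (A ^ Suc N / fact (Suc N))"
    using taylor by (simp add: lessThan_Suc_atMost)
  also have "exp (- A) * (exp t * (A ^ Suc N / fact (Suc N))) = exp (t - A) * (A ^ Suc N / fact (Suc N))"
    by (simp add: mult.assoc flip: exp_add)
  also have "\<dots> \<le> 1 * (A ^ Suc N / fact (Suc N))"
    using t assms by (intro mult_right_mono) auto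
  finally show ?thesis by simp
qed

lemma power2_powr_half:
  fixes x :: real
  assumes "0 \<le> x" and "0 < n"
  shows "(x powr (real n / 2))\<^sup>2 = x ^ n"
proof (cases "x = 0")
  case False
  have "(x powr (real n / 2))\<^sup>2 = x powr (real n / 2 + real n / 2)"
    by (simp only: power2_eq_square powr_add)
  also have "\<dots> = x ^ n"
    using False assms by (simp add: powr_realpow)
  finally show ?thesis .
qed (use assms in simp)

lemma l2_norm_gks_sub_hatPi_sq_le:
  "(l2_norm (\<lambda>x. gks k s x - hatPi N (gks k s) x))\<^sup>2
     \<le> sqrt pi * ((k\<^sup>2 + s\<^sup>2) / 2) ^ Suc N / fact (Suc N)"
proof -
  define A where "A = (k\<^sup>2 + s\<^sup>2) / 2"
  have g: "integrable lborel (\<lambda>x. gks k s x * cnj (gauss_poly (hermite m) x))" for m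
    using has_bochner_integral_gks_hermite has_bochner_integral_iff by blast
  have g_sq: "integrable lborel (\<lambda>x. (cmod (gks k s x))\<^sup>2)"
    and g_norm: "(l2_norm (gks k s))\<^sup>2 = sqrt pi"
    using has_bochner_integral_cmod_gks_sq[of k s]
    by (auto simp: l2_norm_def has_bochner_integral_iff)
  have "(l2_norm (\<lambda>x. gks k s x - hatPi N (gks k s) x))\<^sup>2
      = sqrt pi - (\<Sum>m\<le>N. sqrt pi * exp (- A) * A ^ m / fact m)"
    unfolding l2_norm_sub_hatPi_sq[OF g g_sq] g_norm cmod_l2_inner_gks_hermite_sq A_def ..
  also have "\<dots> = sqrt pi * (1 - exp (- A) * (\<Sum>m\<le>N. A ^ m / fact m))"
    by (simp add: sum_distrib_left right_diff_distrib mult.assoc)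
  also have "\<dots> \<le> sqrt pi * (A ^ Suc N / fact (Suc N))"
    by (intro mult_left_mono poisson_tail_le) (auto simp: A_def)
  finally show ?thesis
    by (simp add: A_def)
qed

theorem lemma2p6:
  shows "\<exists>C>0. \<forall>(k::real) (s::real) (N::nat).
           l2_norm (\<lambda>x. gks k s x - hatPi N (gks k s) x)
             \<le> C / sqrt (fact (N + 1)) * ((k^2 + s^2) / 2) powr (real (N + 1) / 2)"
proof (intro exI[of _ 2] conjI allI)
  fix k s :: real and N :: nat
  define A where "A = (k\<^sup>2 + s\<^sup>2) / 2"
  have "0 \<le> A"
    by (simp add: A_def)
  then have A_powr: "(A powr (real (N + 1) / 2))\<^sup>2 = A ^ (N + 1)"
    by (rule power2_powr_half) simp
  have "sqrt pi \<le> 4"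
    using real_sqrt_le_mono[of pi 16] pi_less_4 by simp
  then have "sqrt pi * A ^ Suc N / fact (Suc N) \<le> 4 * A ^ Suc N / fact (Suc N)"
    using \<open>0 \<le> A\<close> by (intro divide_right_mono mult_right_mono) simp_all
  also have "\<dots> = (2 / sqrt (fact (N + 1)) * A powr (real (N + 1) / 2))\<^sup>2"
    unfolding power_mult_distrib A_powr by (simp add: power_divide)
  finally have "(l2_norm (\<lambda>x. gks k s x - hatPi N (gks k s) x))\<^sup>2
      \<le> (2 / sqrt (fact (N + 1)) * A powr (real (N + 1) / 2))\<^sup>2"
    using l2_norm_gks_sub_hatPi_sq_le[of k s N, folded A_def] by (rule order.trans[rotated])
  then show "l2_norm (\<lambda>x. gks k s x - hatPi N (gks k s) x)
      \<le> 2 / sqrt (fact (N + 1)) * ((k^2 + s^2) / 2) powr (real (N + 1) / 2)"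
    unfolding A_def by (rule power2_le_imp_le) simp
qed simp

end
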